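(* Let $\alpha$ be a unit speed Frenet curve in $\mathbb{E}^3$ and $\beta$ an osculating mate of $\alpha$ with principal normal $\bar N$. The following are equivalent: (i) the principal normal indicatrix $\bar N$ of $\beta$ is a general helix; (ii) $\beta$ is a $C$-slant helix; (iii) $\alpha$ is a slant helix.
   Context: $\alpha:I\to\mathbb{E}^3$ is parametrized by arclength $s$, with Frenet frame $\{T,N,B\}$, curvature $\kappa>0$, torsion $\tau$. An osculating mate of $\alpha$ is a curve $\beta(s)=\int(x_1T+x_2N)ds$ with smooth $x_1,x_2$, $x_1^2+x_2^2=1$ and $\beta''\perp\mathrm{span}\{T,N\}$; $\beta$ is assumed to be a Frenet curve, unit speed in $s$, with Frenet frame $\{\bar T,\bar N,\bar B\}$, curvature $\bar\kappa$, torsion $\bar\tau$. The principal normal indicatrix of $\beta$ is the spherical curve $s\mapsto\bar N(s)$. A general helix is a curve whose tangent makes a constant angle with a fixed direction (equivalently torsion/curvature is constant). A slant helix is a curve whose principal normal makes a constant angle with a fixed direction. For a Frenet curve with frame $\{T,N,B\}$, curvature $k$, torsion $t$, the unit Darboux vector is $W=\frac{tT+kB}{\sqrt{k^2+t^2}}$, and $C=W\times N$; the curve is a $C$-slant helix if the unit vector $C$ makes a constant angle with a fixed direction. *)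

theory Defs
  imports "HOL-Analysis.Analysis"
begin

definition smooth_on :: "real set \<Rightarrow> (real \<Rightarrow> 'a::real_normed_vector) \<Rightarrow> bool" where
  "smooth_on I f \<longleftrightarrow> (\<exists>D :: nat \<Rightarrow> real \<Rightarrow> 'a. D 0 = f \<and>
      (\<forall>n. \<forall>s\<in>I. (D n has_vector_derivative D (Suc n) s) (at s)))"

definition frenet_frame ::
  "real set \<Rightarrow> (real \<Rightarrow> real^3) \<Rightarrow> (real \<Rightarrow> real^3) \<Rightarrow> (real \<Rightarrow> real^3) \<Rightarrow> (real \<Rightarrow> real^3)
     \<Rightarrow> (real \<Rightarrow> real) \<Rightarrow> (real \<Rightarrow> real) \<Rightarrow> bool" where
  "frenet_frame I g T N B k t \<longleftrightarrow> (\<forall>s\<in>I.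
      (g has_vector_derivative T s) (at s) \<and>
      (T has_vector_derivative (k s *\<^sub>R N s)) (at s) \<and>
      (N has_vector_derivative (- (k s) *\<^sub>R T s + t s *\<^sub>R B s)) (at s) \<and>
      (B has_vector_derivative (- (t s) *\<^sub>R N s)) (at s) \<and>
      norm (T s) = 1 \<and> norm (N s) = 1 \<and> T s \<bullet> N s = 0 \<and> B s = cross3 (T s) (N s) \<and>
      k s > 0)"

definition constant_angle :: "real set \<Rightarrow> (real \<Rightarrow> real^3) \<Rightarrow> bool" where
  "constant_angle I V \<longleftrightarrow> (\<exists>u c. norm u = 1 \<and> (\<forall>s\<in>I. V s \<bullet> u = c))"

definition general_helix :: "real set \<Rightarrow> (real \<Rightarrow> real^3) \<Rightarrow> bool" where
  "general_helix I g \<longleftrightarrow> constant_angle I (\<lambda>s. sgn (vector_derivative g (at s)))"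

definition slant_helix :: "real set \<Rightarrow> (real \<Rightarrow> real^3) \<Rightarrow> bool" where
  "slant_helix I N \<longleftrightarrow> constant_angle I N"

text \<open>The unit Darboux vector W = (t T + k B)/sqrt(k^2+t^2) and C = W x N.\<close>
definition darboux_unit :: "real^3 \<Rightarrow> real^3 \<Rightarrow> real \<Rightarrow> real \<Rightarrow> real^3" where
  "darboux_unit T B k t = (1 / sqrt (k\<^sup>2 + t\<^sup>2)) *\<^sub>R (t *\<^sub>R T + k *\<^sub>R B)"

definition C_slant_helix :: "real set \<Rightarrow> (real \<Rightarrow> real^3) \<Rightarrow> (real \<Rightarrow> real^3) \<Rightarrow> (real \<Rightarrow> real^3)
     \<Rightarrow> (real \<Rightarrow> real) \<Rightarrow> (real \<Rightarrow> real) \<Rightarrow> bool" where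
  "C_slant_helix I T N B k t \<longleftrightarrow>
     constant_angle I (\<lambda>s. cross3 (darboux_unit (T s) (B s) (k s) (t s)) (N s))"

end

theory Submission
  imports Defs
begin

text \<open>The osculating condition makes \<open>\<beta>'' = \<kappa>b Nb\<close> orthogonal to \<open>T\<close> and \<open>N\<close>, so \<open>Nb = e B\<close>
  with \<open>e = \<plusminus>1\<close> constant by continuity, and \<open>Nb' = -e \<tau> N\<close>. As \<open>Nb'\<close> never vanishes and \<open>\<tau>\<close> is
  continuous, \<open>\<tau>\<close> has constant sign, so the unit tangent of the indicatrix \<open>Nb\<close> is \<open>N\<close> up to a
  fixed sign: (i) \<open>\<longleftrightarrow>\<close> (iii). For every Frenet curve the unit tangent of its principal normal
  indicatrix is \<open>C = W \<times> N\<close>: (i) \<open>\<longleftrightarrow>\<close> (ii).\<close>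

lemma cross3_cross3_left: "cross3 (cross3 a b) c = (a \<bullet> c) *\<^sub>R b - (b \<bullet> c) *\<^sub>R a"
  by (simp add: cross3_simps forall_3)

lemma cross3_cross3_right: "cross3 a (cross3 b c) = (a \<bullet> c) *\<^sub>R b - (a \<bullet> b) *\<^sub>R c"
  by (simp add: cross3_simps forall_3)

lemma norm_cross3_orthonormal:
  fixes T N :: "real^3"
  assumes "norm T = 1" "norm N = 1" "T \<bullet> N = 0"
  shows "norm (cross3 T N) = 1"
  using norm_cross_dot[of T N] assms by (simp add: power2_eq_1_iff) (smt (verit) norm_ge_zero)

lemma orthogonal_orthonormal_pair_eq_cross3:
  fixes T N v :: "real^3"
  assumes "norm T = 1" "norm N = 1" "T \<bullet> N = 0" "v \<bullet> T = 0" "v \<bullet> N = 0"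
  shows "v = (v \<bullet> cross3 T N) *\<^sub>R cross3 T N"
proof -
  let ?B = "cross3 T N"
  have "cross3 ?B v = 0"
    using assms(4,5) by (simp add: cross3_cross3_left inner_commute)
  then have "(?B \<bullet> v) *\<^sub>R ?B - (?B \<bullet> ?B) *\<^sub>R v = 0"
    by (metis cross3_cross3_right cross_zero_right)
  moreover have "?B \<bullet> ?B = 1"
    using norm_cross3_orthonormal[OF assms(1-3)] by (simp add: dot_square_norm)
  ultimately show ?thesis
    by (simp add: inner_commute)
qed

lemma has_vector_derivative_inner_eq_0_if_constant:
  fixes f g :: "real \<Rightarrow> 'a::real_inner"
  assumes "(f has_vector_derivative f') (at s)" "(g has_vector_derivative g') (at s)"
    and "open I" "s \<in> I" "\<forall>x\<in>I. f x \<bullet> g x = c"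
  shows "f' \<bullet> g s + f s \<bullet> g' = 0"
proof -
  have "((\<lambda>x. f x \<bullet> g x) has_vector_derivative (f s \<bullet> g' + f' \<bullet> g s)) (at s)"
    using bounded_bilinear.has_vector_derivative[OF bounded_bilinear_inner assms(1,2)] .
  then have "((\<lambda>x. c) has_vector_derivative (f s \<bullet> g' + f' \<bullet> g s)) (at s)"
    by (rule has_vector_derivative_transform_within_open) (use assms(3-5) in auto)
  then show ?thesis
    using vector_derivative_unique_at[OF _ has_vector_derivative_const] by (simp add: add.commute)
qed

lemma connected_continuous_sgn_constant:
  fixes f :: "'a::topological_space \<Rightarrow> real"
  assumes "connected S" "continuous_on S f" "\<forall>x\<in>S. f x \<noteq> 0"
  shows "\<exists>\<sigma>. \<bar>\<sigma>\<bar> = 1 \<and> (\<forall>x\<in>S. sgn (f x) = \<sigma>)"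
proof (cases "S = {}")
  case False
  then obtain x0 where "x0 \<in> S" by blast
  have "(\<lambda>x. sgn (f x)) ` S \<subseteq> {-1, 1}"
    using assms(3) by (auto simp: sgn_real_def)
  then have "(\<lambda>x. sgn (f x)) constant_on S"
    using assms by (intro continuous_finite_range_constant continuous_on_sgn) (auto intro: finite_subset)
  then have "\<forall>x\<in>S. sgn (f x) = sgn (f x0)"
    using \<open>x0 \<in> S\<close> by (metis constant_on_def)
  moreover have "\<bar>sgn (f x0)\<bar> = 1"
    using assms(3) \<open>x0 \<in> S\<close> by (simp add: abs_sgn_eq)
  ultimately show ?thesis by blast
qed (intro exI[of _ 1]; simp)

lemma constant_angle_cong:
  assumes "\<forall>s\<in>I. V s = W s"
  shows "constant_angle I V \<longleftrightarrow> constant_angle I W"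
  using assms unfolding constant_angle_def by auto

lemma constant_angle_scaleR_iff:
  assumes "c \<noteq> 0"
  shows "constant_angle I (\<lambda>s. c *\<^sub>R V s) \<longleftrightarrow> constant_angle I V"
proof
  assume "constant_angle I (\<lambda>s. c *\<^sub>R V s)"
  then obtain u d where "norm u = 1" "\<forall>s\<in>I. c * (V s \<bullet> u) = d"
    unfolding constant_angle_def by auto
  then have "norm u = 1 \<and> (\<forall>s\<in>I. V s \<bullet> u = d / c)"
    using assms by (auto simp: field_simps)
  then show "constant_angle I V"
    unfolding constant_angle_def by blast
next
  assume "constant_angle I V"
  then show "constant_angle I (\<lambda>s. c *\<^sub>R V s)"
    unfolding constant_angle_def by (metis inner_scaleR_left)
qed

lemma general_helix_iff_constant_angle:
  assumes "connected I" "continuous_on I c" "\<forall>s\<in>I. c s \<noteq> 0"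
    and "\<forall>s\<in>I. (V has_vector_derivative c s *\<^sub>R W s) (at s)" "\<forall>s\<in>I. norm (W s) = 1"
  shows "general_helix I V \<longleftrightarrow> constant_angle I W"
proof -
  obtain \<sigma> where \<sigma>: "\<bar>\<sigma>\<bar> = 1" "\<forall>s\<in>I. sgn (c s) = \<sigma>"
    using connected_continuous_sgn_constant[OF assms(1-3)] by blast
  have "sgn (vector_derivative V (at s)) = \<sigma> *\<^sub>R W s" if "s \<in> I" for s
  proof -
    have "vector_derivative V (at s) = c s *\<^sub>R W s"
      using assms(4) that vector_derivative_at by blast
    then have "sgn (vector_derivative V (at s)) = sgn (c s) *\<^sub>R sgn (W s)"
      by (simp add: sgn_scaleR)
    then show ?thesis
      using assms(5) \<sigma>(2) that by (simp add: sgn_div_norm)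
  qed
  then have "general_helix I V \<longleftrightarrow> constant_angle I (\<lambda>s. \<sigma> *\<^sub>R W s)"
    unfolding general_helix_def by (intro constant_angle_cong ballI)
  also have "\<dots> \<longleftrightarrow> constant_angle I W"
    using \<sigma>(1) by (intro constant_angle_scaleR_iff) auto
  finally show ?thesis .
qed

lemma frenet_frameD:
  assumes "frenet_frame I g T N B k t" "s \<in> I"
  shows "(g has_vector_derivative T s) (at s)"
    and "(T has_vector_derivative k s *\<^sub>R N s) (at s)"
    and "(N has_vector_derivative - k s *\<^sub>R T s + t s *\<^sub>R B s) (at s)"
    and "(B has_vector_derivative - t s *\<^sub>R N s) (at s)"
    and "norm (T s) = 1" "norm (N s) = 1" "T s \<bullet> N s = 0" "B s = cross3 (T s) (N s)" "k s > 0"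
  using assms unfolding frenet_frame_def by auto

lemma frenet_frame_binormal:
  assumes "frenet_frame I g T N B k t" "s \<in> I"
  shows "norm (B s) = 1" "T s \<bullet> B s = 0" "N s \<bullet> B s = 0" "cross3 (B s) (N s) = - T s"
  using frenet_frameD[OF assms] norm_cross3_orthonormal
  by (simp_all add: dot_cross_self cross3_cross3_left dot_square_norm)

lemma frenet_frame_second_derivative:
  assumes "frenet_frame I g T N B k t" "open I" "s \<in> I"
  shows "vector_derivative (\<lambda>r. vector_derivative g (at r)) (at s) = k s *\<^sub>R N s"
proof -
  have "\<forall>r\<in>I. vector_derivative g (at r) = T r"
    using frenet_frameD(1)[OF assms(1)] vector_derivative_at by blast
  then have "((\<lambda>r. vector_derivative g (at r)) has_vector_derivative k s *\<^sub>R N s) (at s)"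
    using has_vector_derivative_transform_within_open[OF frenet_frameD(2)[OF assms(1,3)] assms(2,3)]
    by simp
  then show ?thesis
    by (rule vector_derivative_at)
qed

lemma frenet_frame_normal_derivative_nonzero:
  assumes "frenet_frame I g T N B k t" "s \<in> I"
  shows "- k s *\<^sub>R T s + t s *\<^sub>R B s \<noteq> 0"
proof
  assume "- k s *\<^sub>R T s + t s *\<^sub>R B s = 0"
  then have "(- k s *\<^sub>R T s + t s *\<^sub>R B s) \<bullet> T s = 0"
    by simp
  then show False
    using frenet_frameD(5,9)[OF assms] frenet_frame_binormal(2)[OF assms]
    by (simp add: inner_diff_right dot_square_norm inner_commute)
qed

lemma frenet_frame_torsion_continuous:
  assumes "smooth_on I g" "frenet_frame I g T N B k t" "open I"
  shows "continuous_on I t"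
proof -
  obtain D where D: "D 0 = g" "\<And>n s. s \<in> I \<Longrightarrow> (D n has_vector_derivative D (Suc n) s) (at s)"
    using assms(1) unfolding smooth_on_def by blast
  have D1: "D 1 s = T s" if "s \<in> I" for s
    using vector_derivative_unique_at[OF D(2)[OF that, of 0]] frenet_frameD(1)[OF assms(2) that] D(1)
    by simp
  have D2: "D 2 s = k s *\<^sub>R N s" if s: "s \<in> I" for s
  proof -
    have "(T has_vector_derivative D 2 s) (at s)"
      using has_vector_derivative_transform_within_open[OF D(2)[OF s, of 1] assms(3) s] D1
      by (simp add: numeral_2_eq_2)
    then show ?thesis
      using vector_derivative_unique_at frenet_frameD(2)[OF assms(2) s] by blast
  qed
  \<comment> \<open>differentiating \<open>D\<^sub>2 \<bullet> B = 0\<close> gives \<open>D\<^sub>3 \<bullet> B = k t\<close>\<close>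
  have torsion: "t s = (D 3 s \<bullet> B s) / norm (D 2 s)" if s: "s \<in> I" for s
  proof -
    have "\<forall>r\<in>I. D 2 r \<bullet> B r = 0"
      using D2 frenet_frame_binormal(3)[OF assms(2)] by simp
    from has_vector_derivative_inner_eq_0_if_constant
      [OF D(2)[OF s, of 2] frenet_frameD(4)[OF assms(2) s] assms(3) s this]
    have "D 3 s \<bullet> B s = k s * t s"
      using D2[OF s] frenet_frameD(6)[OF assms(2) s] by (simp add: numeral_3_eq_3 dot_square_norm)
    moreover have "norm (D 2 s) = k s"
      using D2[OF s] frenet_frameD(6,9)[OF assms(2) s] by simp
    ultimately show ?thesis
      using frenet_frameD(9)[OF assms(2) s] by simp
  qed
  have "continuous_on I (\<lambda>s. (D 3 s \<bullet> B s) / norm (D 2 s))"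
  proof (intro continuous_at_imp_continuous_on ballI)
    fix s assume s: "s \<in> I"
    have "isCont (D 3) s" "isCont (D 2) s" "isCont B s"
      using D(2)[OF s] frenet_frameD(4)[OF assms(2) s] has_vector_derivative_continuous by blast+
    moreover have "norm (D 2 s) \<noteq> 0"
      using D2[OF s] frenet_frameD(6,9)[OF assms(2) s] by simp
    ultimately show "isCont (\<lambda>s. (D 3 s \<bullet> B s) / norm (D 2 s)) s"
      by (intro continuous_intros) auto
  qed
  then show ?thesis
    using torsion continuous_on_cong by (metis (no_types, lifting))
qed

lemma frenet_frame_normal_derivative_direction:
  assumes "frenet_frame I g T N B k t" "s \<in> I"
  shows "sgn (vector_derivative N (at s)) = cross3 (darboux_unit (T s) (B s) (k s) (t s)) (N s)"
proof -
  let ?d = "- k s *\<^sub>R T s + t s *\<^sub>R B s"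
  have "(norm ?d)\<^sup>2 = (k s)\<^sup>2 + (t s)\<^sup>2"
    using frenet_frameD(5)[OF assms] frenet_frame_binormal(1,2)[OF assms]
    unfolding power2_norm_eq_inner norm_eq_1
    by (simp add: inner_diff_left inner_diff_right inner_commute power2_eq_square)
  then have "norm ?d = sqrt ((k s)\<^sup>2 + (t s)\<^sup>2)"
    by (simp add: real_sqrt_unique)
  moreover have "cross3 (t s *\<^sub>R T s + k s *\<^sub>R B s) (N s) = ?d"
    using frenet_frameD(8)[OF assms] frenet_frame_binormal(4)[OF assms]
    by (simp add: cross_add_left cross_mult_left)
  ultimately show ?thesis
    using vector_derivative_at[OF frenet_frameD(3)[OF assms]]
    by (simp add: sgn_div_norm darboux_unit_def cross_mult_left divide_inverse_commute)
qed

lemma general_helix_normal_iff_C_slant_helix: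
  assumes "frenet_frame I g T N B k t"
  shows "general_helix I N \<longleftrightarrow> C_slant_helix I T N B k t"
  unfolding general_helix_def C_slant_helix_def
  using frenet_frame_normal_derivative_direction[OF assms] by (intro constant_angle_cong ballI)

lemma osculating_mate_normal_eq_binormal:
  assumes "open I" "connected I"
    and "frenet_frame I \<alpha> T N B \<kappa> \<tau>" "frenet_frame I \<beta> Tb Nb Bb \<kappa>b \<tau>b"
    and "\<forall>s\<in>I. vector_derivative (\<lambda>r. vector_derivative \<beta> (at r)) (at s) \<bullet> T s = 0"
    and "\<forall>s\<in>I. vector_derivative (\<lambda>r. vector_derivative \<beta> (at r)) (at s) \<bullet> N s = 0"
  shows "\<exists>e. \<bar>e\<bar> = 1 \<and> (\<forall>s\<in>I. Nb s = e *\<^sub>R B s)"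
proof -
  have pointwise: "Nb s = (Nb s \<bullet> B s) *\<^sub>R B s \<and> \<bar>Nb s \<bullet> B s\<bar> = 1" if s: "s \<in> I" for s
  proof -
    have "\<kappa>b s * (Nb s \<bullet> T s) = 0" "\<kappa>b s * (Nb s \<bullet> N s) = 0"
      using assms(5,6) s frenet_frame_second_derivative[OF assms(4,1) s] by auto
    then have "Nb s = (Nb s \<bullet> B s) *\<^sub>R B s"
      using orthogonal_orthonormal_pair_eq_cross3[of "T s" "N s" "Nb s"]
        frenet_frameD(5-9)[OF assms(3) s] frenet_frameD(9)[OF assms(4) s] by simp
    moreover have "norm (Nb s) = 1" "norm (B s) = 1"
      using frenet_frameD(6)[OF assms(4) s] frenet_frame_binormal(1)[OF assms(3) s] .
    ultimately show ?thesis
      by (metis mult.right_neutral norm_scaleR real_norm_def)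
  qed
  have "continuous_on I (\<lambda>s. Nb s \<bullet> B s)"
    using frenet_frameD(3)[OF assms(4)] frenet_frameD(4)[OF assms(3)]
    by (intro continuous_at_imp_continuous_on ballI continuous_intros)
      (auto intro: has_vector_derivative_continuous)
  moreover have "\<forall>s\<in>I. Nb s \<bullet> B s \<noteq> 0"
    using pointwise by fastforce
  ultimately obtain e where "\<bar>e\<bar> = 1" "\<forall>s\<in>I. sgn (Nb s \<bullet> B s) = e"
    using connected_continuous_sgn_constant[OF assms(2)] by blast
  moreover have "sgn (Nb s \<bullet> B s) = Nb s \<bullet> B s" if "s \<in> I" for s
    using pointwise[OF that] by (auto simp: sgn_real_def abs_if split: if_splits)
  ultimately show ?thesis
    using pointwise by metis
qed

theorem theorem15:
  fixes I :: "real set"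
    and \<alpha> \<beta> T N B Tb Nb Bb :: "real \<Rightarrow> real^3"
    and \<kappa> \<tau> \<kappa>b \<tau>b x1 x2 :: "real \<Rightarrow> real"
  assumes I: "open I" "is_interval I" "I \<noteq> {}"
    and \<alpha>_smooth: "smooth_on I \<alpha>"
    and \<alpha>_frame: "frenet_frame I \<alpha> T N B \<kappa> \<tau>"
    and x_smooth: "smooth_on I x1" "smooth_on I x2"
    and x_unit: "\<forall>s\<in>I. (x1 s)\<^sup>2 + (x2 s)\<^sup>2 = 1"
    and \<beta>_deriv: "\<forall>s\<in>I. (\<beta> has_vector_derivative (x1 s *\<^sub>R T s + x2 s *\<^sub>R N s)) (at s)"
    and \<beta>_osc: "\<forall>s\<in>I. vector_derivative (\<lambda>r. vector_derivative \<beta> (at r)) (at s) \<bullet> T s = 0"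
                "\<forall>s\<in>I. vector_derivative (\<lambda>r. vector_derivative \<beta> (at r)) (at s) \<bullet> N s = 0"
    and \<beta>_frame: "frenet_frame I \<beta> Tb Nb Bb \<kappa>b \<tau>b"
  shows "(general_helix I Nb \<longleftrightarrow> C_slant_helix I Tb Nb Bb \<kappa>b \<tau>b) \<and>
         (C_slant_helix I Tb Nb Bb \<kappa>b \<tau>b \<longleftrightarrow> slant_helix I N)"
proof -
  have conn: "connected I"
    using I(2) by (rule is_interval_connected)
  obtain e where e: "\<bar>e\<bar> = 1" "\<forall>s\<in>I. Nb s = e *\<^sub>R B s"
    using osculating_mate_normal_eq_binormal[OF I(1) conn \<alpha>_frame \<beta>_frame \<beta>_osc] by blast
  have Nb_deriv: "(Nb has_vector_derivative (- e * \<tau> s) *\<^sub>R N s) (at s)" if s: "s \<in> I" for s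
  proof -
    have "((\<lambda>r. e *\<^sub>R B r) has_vector_derivative (- e * \<tau> s) *\<^sub>R N s) (at s)"
      using bounded_linear.has_vector_derivative[OF bounded_linear_scaleR_right
          frenet_frameD(4)[OF \<alpha>_frame s], of e]
      by simp
    then show ?thesis
      by (rule has_vector_derivative_transform_within_open[OF _ I(1) s]) (use e(2) in simp)
  qed
  have "\<tau> s \<noteq> 0" if s: "s \<in> I" for s
    using vector_derivative_unique_at[OF Nb_deriv[OF s] frenet_frameD(3)[OF \<beta>_frame s]]
      frenet_frame_normal_derivative_nonzero[OF \<beta>_frame s] by auto
  then have "general_helix I Nb \<longleftrightarrow> slant_helix I N"
    unfolding slant_helix_def
    using frenet_frame_torsion_continuous[OF \<alpha>_smooth \<alpha>_frame I(1)] Nb_deriv e(1)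
      frenet_frameD(6)[OF \<alpha>_frame]
    by (intro general_helix_iff_constant_angle[OF conn, where c = "\<lambda>s. - e * \<tau> s"])
      (auto intro!: continuous_intros)
  then show ?thesis
    using general_helix_normal_iff_C_slant_helix[OF \<beta>_frame] by blast
qed

end
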